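(* Let $W=(V,B)$ be a non-degenerate formed space of Witt index $\omega\ge2$ as in the context, and let $1<k<\omega$. Then the polar Grassmann graph on singular $k$-subspaces of $W$ is not distance-regular.
   Context: $V$ is a finite-dimensional vector space over $\mathbb{F}_q$ and $W=(V,B)$ is one of: a symplectic space of dimension $2\omega$; an orthogonal space of dimension $2\omega+1$, of plus type of dimension $2\omega$, or of minus type of dimension $2\omega+2$; a unitary space of dimension $2\omega+1$ or $2\omega$ ($q$ a square). A subspace is singular if it is totally isotropic (totally singular in the orthogonal case); maximal singular subspaces have dimension $\omega$. For $k<\omega$ the polar Grassmann graph has as vertices the singular $k$-subspaces, two distinct vertices $u,v$ adjacent iff $u+v$ is a singular $(k+1)$-subspace. A connected graph is distance-regular if there are integers $b_i,c_i$ such that for any two vertices $X,Y$ at distance $i$, exactly $c_i$ neighbours of $X$ are at distance $i-1$ from $Y$ and exactly $b_i$ at distance $i+1$ from $Y$. *)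

theory Defs
  imports "HOL-Analysis.Cartesian_Space"
begin

text \<open>The ambient space is V = F_q^n, realised as the type 'a^'n with
 'a a finite field (q = CARD('a)) and n = CARD('n).\<close>

definition bilinear_form :: "('a::field^'n \<Rightarrow> 'a^'n \<Rightarrow> 'a) \<Rightarrow> bool" where
  "bilinear_form B \<longleftrightarrow>
     (\<forall>u v w. B (u + v) w = B u w + B v w) \<and> (\<forall>c u w. B (c *s u) w = c * B u w) \<and>
     (\<forall>u v w. B u (v + w) = B u v + B u w) \<and> (\<forall>c u w. B u (c *s w) = c * B u w)"

definition nondegenerate_form :: "('a::field^'n \<Rightarrow> 'a^'n \<Rightarrow> 'a) \<Rightarrow> bool" where
  "nondegenerate_form B \<longleftrightarrow> (\<forall>v. (\<forall>w. B v w = 0) \<longrightarrow> v = 0)"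

definition symplectic_form :: "('a::field^'n \<Rightarrow> 'a^'n \<Rightarrow> 'a) \<Rightarrow> bool" where
  "symplectic_form B \<longleftrightarrow> bilinear_form B \<and> (\<forall>v. B v v = 0) \<and> nondegenerate_form B"

definition polar_form :: "('a::field^'n \<Rightarrow> 'a) \<Rightarrow> 'a^'n \<Rightarrow> 'a^'n \<Rightarrow> 'a" where
  "polar_form Q u v = Q (u + v) - Q u - Q v"

definition quadratic_form :: "('a::field^'n \<Rightarrow> 'a) \<Rightarrow> bool" where
  "quadratic_form Q \<longleftrightarrow> (\<forall>c v. Q (c *s v) = c ^ 2 * Q v) \<and> bilinear_form (polar_form Q)"

text \<open>Non-degenerate (non-singular) quadratic form: no nonzero singular vector
 in the radical of the polar form (this is the usual notion in every characteristic).\<close>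
definition nondegenerate_quadratic_form :: "('a::field^'n \<Rightarrow> 'a) \<Rightarrow> bool" where
  "nondegenerate_quadratic_form Q \<longleftrightarrow> quadratic_form Q \<and>
     (\<forall>v. v \<noteq> 0 \<and> (\<forall>w. polar_form Q v w = 0) \<longrightarrow> Q v \<noteq> 0)"

text \<open>Unitary: hermitian form with respect to a field automorphism of order 2
 (its existence forces q to be a square).\<close>
definition field_involution :: "('a::field \<Rightarrow> 'a) \<Rightarrow> bool" where
  "field_involution \<sigma> \<longleftrightarrow> (\<forall>x y. \<sigma> (x + y) = \<sigma> x + \<sigma> y) \<and> (\<forall>x y. \<sigma> (x * y) = \<sigma> x * \<sigma> y)
     \<and> (\<forall>x. \<sigma> (\<sigma> x) = x) \<and> (\<exists>x. \<sigma> x \<noteq> x)"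

definition hermitian_form :: "('a::field \<Rightarrow> 'a) \<Rightarrow> ('a^'n \<Rightarrow> 'a^'n \<Rightarrow> 'a) \<Rightarrow> bool" where
  "hermitian_form \<sigma> B \<longleftrightarrow> field_involution \<sigma> \<and>
     (\<forall>u v w. B (u + v) w = B u w + B v w) \<and> (\<forall>c u w. B (c *s u) w = c * B u w) \<and>
     (\<forall>u w. B w u = \<sigma> (B u w))"

definition totally_isotropic :: "('a::field^'n \<Rightarrow> 'a^'n \<Rightarrow> 'a) \<Rightarrow> ('a^'n) set \<Rightarrow> bool" where
  "totally_isotropic B S \<longleftrightarrow> (\<forall>u\<in>S. \<forall>v\<in>S. B u v = 0)"

definition totally_singular :: "('a::field^'n \<Rightarrow> 'a) \<Rightarrow> ('a^'n) set \<Rightarrow> bool" where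
  "totally_singular Q S \<longleftrightarrow> (\<forall>u\<in>S. Q u = 0)"

definition has_witt_index :: "(('a::field^'n) set \<Rightarrow> bool) \<Rightarrow> nat \<Rightarrow> bool" where
  "has_witt_index sing \<omega> \<longleftrightarrow>
     (\<exists>S. vec.subspace S \<and> sing S \<and> vec.dim S = \<omega>) \<and>
     (\<forall>S. vec.subspace S \<and> sing S \<longrightarrow> vec.dim S \<le> \<omega>)"

text \<open>The formed spaces of the context, described by their singularity predicate:
 symplectic of dimension 2\<omega>; orthogonal of dimension 2\<omega>+1, 2\<omega> (plus type) or
 2\<omega>+2 (minus type); unitary of dimension 2\<omega>+1 or 2\<omega>; all non-degenerate of Witt index \<omega>.\<close>
definition classical_formed_space :: "(('a::{field,finite}^'n) set \<Rightarrow> bool) \<Rightarrow> nat \<Rightarrow> bool" where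
  "classical_formed_space sing \<omega> \<longleftrightarrow> has_witt_index sing \<omega> \<and>
    ((\<exists>B. symplectic_form B \<and> CARD('n) = 2 * \<omega> \<and> sing = totally_isotropic B) \<or>
     (\<exists>Q. nondegenerate_quadratic_form Q \<and> CARD('n) \<in> {2 * \<omega> + 1, 2 * \<omega>, 2 * \<omega> + 2}
          \<and> sing = totally_singular Q) \<or>
     (\<exists>\<sigma> B. hermitian_form \<sigma> B \<and> nondegenerate_form B \<and> CARD('n) \<in> {2 * \<omega> + 1, 2 * \<omega>}
          \<and> sing = totally_isotropic B))"

definition subspace_sum :: "('a::field^'n) set \<Rightarrow> ('a^'n) set \<Rightarrow> ('a^'n) set" where
  "subspace_sum U W = {u + w | u w. u \<in> U \<and> w \<in> W}"

definition singular_subspace :: "(('a::field^'n) set \<Rightarrow> bool) \<Rightarrow> nat \<Rightarrow> ('a^'n) set \<Rightarrow> bool" where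
  "singular_subspace sing k S \<longleftrightarrow> vec.subspace S \<and> sing S \<and> vec.dim S = k"

definition polar_grassmann_vertices :: "(('a::field^'n) set \<Rightarrow> bool) \<Rightarrow> nat \<Rightarrow> ('a^'n) set set" where
  "polar_grassmann_vertices sing k = {S. singular_subspace sing k S}"

definition polar_grassmann_adj :: "(('a::field^'n) set \<Rightarrow> bool) \<Rightarrow> nat \<Rightarrow> ('a^'n) set \<Rightarrow> ('a^'n) set \<Rightarrow> bool" where
  "polar_grassmann_adj sing k U W \<longleftrightarrow> U \<noteq> W \<and> singular_subspace sing (k + 1) (subspace_sum U W)"

definition gadj :: "'v set \<Rightarrow> ('v \<Rightarrow> 'v \<Rightarrow> bool) \<Rightarrow> 'v \<Rightarrow> 'v \<Rightarrow> bool" where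
  "gadj Vx E x y \<longleftrightarrow> x \<in> Vx \<and> y \<in> Vx \<and> E x y"

definition graph_connected :: "'v set \<Rightarrow> ('v \<Rightarrow> 'v \<Rightarrow> bool) \<Rightarrow> bool" where
  "graph_connected Vx E \<longleftrightarrow> (\<forall>x\<in>Vx. \<forall>y\<in>Vx. \<exists>n. (gadj Vx E ^^ n) x y)"

definition gdist :: "'v set \<Rightarrow> ('v \<Rightarrow> 'v \<Rightarrow> bool) \<Rightarrow> 'v \<Rightarrow> 'v \<Rightarrow> nat" where
  "gdist Vx E x y = (LEAST n. (gadj Vx E ^^ n) x y)"

definition distance_regular :: "'v set \<Rightarrow> ('v \<Rightarrow> 'v \<Rightarrow> bool) \<Rightarrow> bool" where
  "distance_regular Vx E \<longleftrightarrow> graph_connected Vx E \<and>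
    (\<exists>b c :: nat \<Rightarrow> nat. \<forall>x\<in>Vx. \<forall>y\<in>Vx.
       card {z \<in> Vx. E x z \<and> gdist Vx E z y = gdist Vx E x y + 1} = b (gdist Vx E x y) \<and>
       (gdist Vx E x y \<ge> 1 \<longrightarrow>
          card {z \<in> Vx. E x z \<and> gdist Vx E z y = gdist Vx E x y - 1} = c (gdist Vx E x y)))"

end

theory Submission
  imports Defs
begin

text \<open>Take a singular \<open>(k+1)\<close>-space \<open>\<langle>u\<^sub>1, u\<^sub>2, w\<^sub>1, E\<rangle>\<close> with \<open>dim E = k - 2\<close>, a singular
  vector \<open>w\<^sub>2\<close> orthogonal to \<open>u\<^sub>1, w\<^sub>1, E\<close> but not to \<open>u\<^sub>2\<close>, and a singular vector \<open>y\<close>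
  orthogonal to \<open>u\<^sub>1, u\<^sub>2, w\<^sub>2, E\<close> but not to \<open>w\<^sub>1\<close>; the partners exist by
  non-degeneracy. Then \<open>U = \<langle>u\<^sub>1, u\<^sub>2, E\<rangle>\<close> is at distance 2 from both \<open>W = \<langle>w\<^sub>1, w\<^sub>2, E\<rangle>\<close>
  and \<open>W' = \<langle>u\<^sub>1, w\<^sub>2, E\<rangle>\<close>. As \<open>U\<close> and \<open>W\<close> meet in codimension 2, a common neighbour
  is spanned by its intersections with \<open>U\<close> and \<open>W\<close>, which forces it to be
  \<open>Z = \<langle>u\<^sub>1, w\<^sub>1, E\<rangle>\<close>; but \<open>U\<close> and \<open>W'\<close> have the two common neighbours \<open>Z\<close> and
  \<open>\<langle>u\<^sub>1, y, E\<rangle>\<close>. Hence the intersection number \<open>c\<^sub>2\<close> is not constant.\<close>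

lemma gdist_le_1:
  assumes "x \<in> Vx" "y \<in> Vx" "E x y"
  shows "gdist Vx E x y \<le> 1"
proof -
  have "(gadj Vx E ^^ 1) x y" unfolding relpowp_1 using assms by (simp add: gadj_def)
  then show ?thesis unfolding gdist_def by (rule Least_le)
qed

lemma gdist_eq_1_iff:
  assumes "x \<in> Vx" "y \<in> Vx" "\<exists>n. (gadj Vx E ^^ n) x y"
  shows "gdist Vx E x y = 1 \<longleftrightarrow> E x y \<and> x \<noteq> y"
proof
  assume dist: "gdist Vx E x y = 1"
  have "(gadj Vx E ^^ gdist Vx E x y) x y"
    unfolding gdist_def using assms(3) by (rule LeastI_ex)
  then have "E x y" using dist unfolding gadj_def by (metis relpowp_1)
  moreover have "x \<noteq> y"
  proof
    assume "x = y"
    then have "gdist Vx E x y = 0" unfolding gdist_def by (intro Least_eq_0) simp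
    with dist show False by simp
  qed
  ultimately show "E x y \<and> x \<noteq> y" ..
next
  assume "E x y \<and> x \<noteq> y"
  moreover have "gdist Vx E x y \<noteq> 0"
  proof
    assume "gdist Vx E x y = 0"
    moreover have "(gadj Vx E ^^ gdist Vx E x y) x y"
      unfolding gdist_def using assms(3) by (rule LeastI_ex)
    ultimately have "x = y" by simp
    with \<open>E x y \<and> x \<noteq> y\<close> show False by simp
  qed
  ultimately show "gdist Vx E x y = 1" using gdist_le_1[OF assms(1,2), of E] by simp
qed

lemma gdist_eq_2:
  assumes "x \<in> Vx" "y \<in> Vx" "z \<in> Vx" "x \<noteq> y" "\<not> E x y" "E x z" "E z y"
  shows "gdist Vx E x y = 2"
  unfolding gdist_def
proof (rule Least_equality)
  have "(gadj Vx E ^^ 1) x z" unfolding relpowp_1 using assms by (simp add: gadj_def)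
  then have "(gadj Vx E ^^ Suc 1) x y" by (rule relpowp_Suc_I) (use assms in \<open>simp add: gadj_def\<close>)
  then show "(gadj Vx E ^^ 2) x y" by (simp only: numeral_2_eq_2 One_nat_def)
next
  fix m assume "(gadj Vx E ^^ m) x y"
  show "2 \<le> m"
  proof (rule ccontr)
    assume "\<not> 2 \<le> m"
    then have "m = 0 \<or> m = 1" by auto
    then show False
      using \<open>(gadj Vx E ^^ m) x y\<close> assms(4,5) by (auto elim: relpowp_0_E simp: gadj_def)
  qed
qed

lemma distance_regular_card_common_neighbours_eq:
  assumes "distance_regular Vx E"
    and "x \<in> Vx" "y \<in> Vx" "gdist Vx E x y = 2"
    and "x' \<in> Vx" "y' \<in> Vx" "gdist Vx E x' y' = 2"
  shows "card {z \<in> Vx. E x z \<and> E z y} = card {z \<in> Vx. E x' z \<and> E z y'}"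
proof -
  obtain c where conn: "graph_connected Vx E" and c: "\<And>x y. x \<in> Vx \<Longrightarrow> y \<in> Vx \<Longrightarrow>
      gdist Vx E x y \<ge> 1 \<Longrightarrow>
      card {z \<in> Vx. E x z \<and> gdist Vx E z y = gdist Vx E x y - 1} = c (gdist Vx E x y)"
    using assms(1) unfolding distance_regular_def by blast
  have "card {z \<in> Vx. E x z \<and> E z y} = c 2"
    if "x \<in> Vx" "y \<in> Vx" "gdist Vx E x y = 2" for x y
  proof -
    have "\<not> E x y" using gdist_le_1[of x Vx y E] that by auto
    then have "E x z \<and> gdist Vx E z y = 1 \<longleftrightarrow> E x z \<and> E z y" if "z \<in> Vx" for z
      using gdist_eq_1_iff[of z Vx y E] conn that \<open>y \<in> Vx\<close> unfolding graph_connected_def by auto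
    then have "{z \<in> Vx. E x z \<and> E z y} = {z \<in> Vx. E x z \<and> gdist Vx E z y = gdist Vx E x y - 1}"
      using \<open>gdist Vx E x y = 2\<close> by auto
    then show ?thesis using c[OF that(1,2)] that(3) by simp
  qed
  then show ?thesis using assms(2-7) by presburger
qed

lemma subspace_sum_span: "subspace_sum (vec.span X) (vec.span Y) = vec.span (X \<union> Y)"
  unfolding subspace_sum_def vec.span_Un by simp

lemma subspace_subspace_sum:
  "vec.subspace U \<Longrightarrow> vec.subspace W \<Longrightarrow> vec.subspace (subspace_sum U W)"
  unfolding subspace_sum_def by (rule vec.subspace_sums)

lemma dim_subspace_sum_Int:
  "vec.subspace U \<Longrightarrow> vec.subspace W \<Longrightarrow>
    vec.dim (subspace_sum U W) + vec.dim (U \<inter> W) = vec.dim U + vec.dim W"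
  unfolding subspace_sum_def by (rule vec.dim_sums_Int)

lemma subspace_sum_mono: "U \<subseteq> U' \<Longrightarrow> W \<subseteq> W' \<Longrightarrow> subspace_sum U W \<subseteq> subspace_sum U' W'"
  unfolding subspace_sum_def by blast

lemma subspace_sum_upper:
  assumes "vec.subspace U" "vec.subspace W"
  shows "U \<subseteq> subspace_sum U W" "W \<subseteq> subspace_sum U W"
  unfolding subspace_sum_def using vec.subspace_0[OF assms(1)] vec.subspace_0[OF assms(2)]
  by force+

lemma subspace_sum_subset:
  "vec.subspace Z \<Longrightarrow> U \<subseteq> Z \<Longrightarrow> W \<subseteq> Z \<Longrightarrow> subspace_sum U W \<subseteq> Z"
  unfolding subspace_sum_def using vec.subspace_add by blast

lemma independent_insert_notin_span:
  "vec.independent (insert a S) \<Longrightarrow> a \<notin> S \<Longrightarrow> a \<notin> vec.span S"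
  by (simp add: vec.independent_insert)

lemma polar_grassmann_vertices_iff:
  "U \<in> polar_grassmann_vertices sing k \<longleftrightarrow> vec.subspace U \<and> sing U \<and> vec.dim U = k"
  unfolding polar_grassmann_vertices_def singular_subspace_def by simp

section \<open>Formed spaces\<close>

text \<open>The axioms common to the symplectic, orthogonal and unitary cases: \<open>B\<close> is the
  sesquilinear form (the polar form in the orthogonal case) and \<open>singular\<close> singles out the
  singular vectors (\<open>Q v = 0\<close>, resp. \<open>B v v = 0\<close>). Non-degeneracy is only required on
  singular vectors, since in characteristic 2 the polar form of a non-degenerate quadratic
  form may have a radical.\<close>

locale formed_space =
  fixes B :: "'a::field^'n \<Rightarrow> 'a^'n \<Rightarrow> 'a"
    and singular :: "'a^'n \<Rightarrow> bool"
    and sing :: "('a^'n) set \<Rightarrow> bool"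
  assumes add_left: "\<And>x y z. B (x + y) z = B x z + B y z"
    and scale_left: "\<And>c x z. B (c *s x) z = c * B x z"
    and add_right: "\<And>x y z. B z (x + y) = B z x + B z y"
    and scale_right_surj: "\<And>c p. \<exists>d. \<forall>v. B v (d *s p) = c * B v p"
    and orth_commute: "\<And>x y. B x y = 0 \<longleftrightarrow> B y x = 0"
    and singular_zero: "singular 0"
    and singular_add: "\<And>x y. singular x \<Longrightarrow> singular y \<Longrightarrow> B x y = 0 \<Longrightarrow> singular (x + y)"
    and singular_scale: "\<And>c x. singular x \<Longrightarrow> singular (c *s x)"
    and singular_isotropic: "\<And>x. singular x \<Longrightarrow> B x x = 0"
    and singular_shift: "\<And>v a. singular a \<Longrightarrow> B v a \<noteq> 0 \<Longrightarrow> \<exists>c. singular (v + c *s a)"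
    and singular_radical_eq_0: "\<And>v. singular v \<Longrightarrow> (\<forall>x. B x v = 0) \<Longrightarrow> v = 0"
    and sing_iff: "\<And>S. vec.subspace S \<Longrightarrow>
      sing S \<longleftrightarrow> (\<forall>u\<in>S. singular u) \<and> (\<forall>u\<in>S. \<forall>v\<in>S. B u v = 0)"
begin

lemma zero_left [simp]: "B 0 z = 0"
  using scale_left[of 0 0 z] by simp

lemma zero_right [simp]: "B z 0 = 0"
  using add_right[of z 0 0] by (metis add.right_neutral add_cancel_right_right)

lemma diff_left: "B (x - y) z = B x z - B y z"
  using add_left[of "x - y" y z] by simp

lemma diff_right: "B z (x - y) = B z x - B z y"
  using add_right[of z "x - y" y] by simp

lemma orth_scale_right: "B x y = 0 \<Longrightarrow> B x (c *s y) = 0"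
  by (metis orth_commute scale_left mult_zero_right)

lemma orth_span:
  assumes "\<forall>x\<in>S. B x a = 0" "x \<in> vec.span S"
  shows "B x a = 0"
proof -
  have "vec.subspace {x. B x a = 0}"
    unfolding vec.subspace_def by (simp add: add_left scale_left)
  then show ?thesis using vec.span_minimal[of S "{x. B x a = 0}"] assms by blast
qed

lemma span_insert_orth:
  assumes "x \<in> vec.span (insert u S)" "\<forall>s\<in>S. B s w = 0" "B u w \<noteq> 0" "B x w = 0"
  shows "x \<in> vec.span S"
proof -
  obtain c where c: "x - c *s u \<in> vec.span S"
    using assms(1) unfolding vec.span_insert by blast
  then have "B x w = c * B u w"
    using orth_span[OF assms(2) c] by (simp add: diff_left scale_left)
  then have "c = 0" using assms(3,4) by simp
  then show ?thesis using c by simp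
qed

definition singular_set :: "('a^'n) set \<Rightarrow> bool" where
  "singular_set X \<longleftrightarrow> (\<forall>x\<in>X. singular x) \<and> (\<forall>x\<in>X. \<forall>y\<in>X. B x y = 0)"

lemma singular_set_subset: "singular_set X \<Longrightarrow> Y \<subseteq> X \<Longrightarrow> singular_set Y"
  unfolding singular_set_def by blast

lemma sing_iff_singular_set: "vec.subspace S \<Longrightarrow> sing S \<longleftrightarrow> singular_set S"
  unfolding singular_set_def by (rule sing_iff)

lemma singular_set_span:
  assumes "singular_set X"
  shows "singular_set (vec.span X)"
proof -
  have X: "\<And>x. x \<in> X \<Longrightarrow> singular x" "\<And>x z. x \<in> X \<Longrightarrow> z \<in> X \<Longrightarrow> B x z = 0"
    using assms unfolding singular_set_def by blast+
  have orth: "B u v = 0" if "u \<in> vec.span X" "v \<in> vec.span X" for u v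
  proof -
    have "B x u = 0" if "x \<in> X" for x
      using orth_span[of X x u] X(2) \<open>u \<in> vec.span X\<close> that orth_commute by blast
    then have "B v u = 0" using orth_span[of X u v] \<open>v \<in> vec.span X\<close> by blast
    then show ?thesis using orth_commute by blast
  qed
  have "u \<in> vec.span X \<and> singular u" if "u \<in> vec.span X" for u
    using that
  proof (induction rule: vec.span_induct_alt)
    case base
    then show ?case using vec.span_zero singular_zero by blast
  next
    case (step c x y)
    have "B (c *s x) y = 0"
      using orth[OF vec.span_base[OF step(1)]] step(2) by (simp add: scale_left)
    then have "singular (c *s x + y)"
      using singular_add[OF singular_scale[OF X(1)[OF step(1)]]] step(2) by blast
    moreover have "c *s x + y \<in> vec.span X"
      using step vec.span_add vec.span_scale vec.span_base by blast
    ultimately show ?case by blast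
  qed
  then show ?thesis using orth unfolding singular_set_def by blast
qed

lemma sing_span: "singular_set X \<Longrightarrow> sing (vec.span X)"
  using sing_iff_singular_set singular_set_span by blast

text \<open>That is, \<open>P\<^sup>\<bottom>\<^sup>\<bottom> \<subseteq> span P + rad B\<close>; this is where the surjectivity of the right
  scalars is needed.\<close>

lemma perp_perp_span:
  assumes "finite P" "\<forall>v. (\<forall>p\<in>P. B v p = 0) \<longrightarrow> B v a = 0"
  shows "\<exists>p\<in>vec.span P. \<forall>v. B v a = B v p"
  using assms
proof (induction P arbitrary: a rule: finite_induct)
  case empty
  then show ?case using vec.span_zero by auto
next
  case (insert q P)
  show ?case
  proof (cases "\<forall>v. (\<forall>p\<in>P. B v p = 0) \<longrightarrow> B v q = 0")
    case True
    then have "\<forall>v. (\<forall>p\<in>P. B v p = 0) \<longrightarrow> B v a = 0"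
      using insert.prems by auto
    then obtain p where "p \<in> vec.span P" "\<forall>v. B v a = B v p"
      using insert.IH by blast
    then show ?thesis using vec.span_mono[of P "insert q P"] by blast
  next
    case False
    then obtain v0 where v0: "\<forall>p\<in>P. B v0 p = 0" "B v0 q \<noteq> 0" by blast
    obtain d where d: "\<forall>v. B v (d *s q) = B v0 a / B v0 q * B v q"
      using scale_right_surj by blast
    have "B v (a - d *s q) = 0" if "\<forall>p\<in>P. B v p = 0" for v
    proof -
      define m where "m = B v q / B v0 q"
      have "\<forall>p\<in>insert q P. B (v - m *s v0) p = 0"
        using that v0 by (simp add: diff_left scale_left m_def)
      then have "B (v - m *s v0) a = 0" using insert.prems by blast
      then have "B v a = m * B v0 a" by (simp add: diff_left scale_left)
      then show ?thesis by (simp add: diff_right d m_def)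
    qed
    then obtain p where p: "p \<in> vec.span P" "\<forall>v. B v (a - d *s q) = B v p"
      using insert.IH by blast
    have "p + d *s q \<in> vec.span (insert q P)"
      using p(1) vec.span_mono[of P "insert q P"]
      by (blast intro: vec.span_add vec.span_scale vec.span_base)
    moreover have "\<forall>v. B v a = B v (p + d *s q)"
      using p(2) by (simp add: diff_right add_right algebra_simps)
    ultimately show ?thesis by blast
  qed
qed

lemma singular_partner:
  assumes "finite P" "singular_set (insert a P)" "a \<notin> vec.span P"
  obtains w where "singular w" "\<forall>p\<in>P. B w p = 0" "B w a \<noteq> 0"
proof -
  have "\<exists>v. (\<forall>p\<in>P. B v p = 0) \<and> B v a \<noteq> 0"
  proof (rule ccontr)
    assume "\<nexists>v. (\<forall>p\<in>P. B v p = 0) \<and> B v a \<noteq> 0"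
    then obtain p where p: "p \<in> vec.span P" "\<forall>v. B v a = B v p"
      using perp_perp_span[OF assms(1)] by blast
    have "p \<in> vec.span (insert a P)"
      using p(1) vec.span_mono[of P "insert a P"] by blast
    then have "a - p \<in> vec.span (insert a P)"
      by (simp add: vec.span_diff vec.span_base)
    then have "singular (a - p)"
      using singular_set_span[OF assms(2)] unfolding singular_set_def by blast
    moreover have "\<forall>v. B v (a - p) = 0" using p(2) by (simp add: diff_right)
    ultimately have "a - p = 0" by (rule singular_radical_eq_0)
    with p(1) assms(3) show False by simp
  qed
  then obtain v where v: "\<forall>p\<in>P. B v p = 0" "B v a \<noteq> 0" by blast
  have a: "singular a" "B a a = 0" "\<forall>p\<in>P. B a p = 0"
    using assms(2) unfolding singular_set_def by auto
  obtain c where "singular (v + c *s a)"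
    using singular_shift[OF a(1) v(2)] by blast
  moreover have "\<forall>p\<in>P. B (v + c *s a) p = 0" "B (v + c *s a) a \<noteq> 0"
    using v a by (simp_all add: add_left scale_left)
  ultimately show thesis by (rule that)
qed

lemma singular_orth_adjust:
  assumes "singular x" "singular u" "B x u = 0" "B u w \<noteq> 0"
  obtains y where "singular y" "B y w = 0" "\<And>p. B u p = 0 \<Longrightarrow> B y p = B x p"
proof
  define c where "c = - B x w / B u w"
  show "singular (x + c *s u)"
    using singular_add[OF assms(1) singular_scale[OF assms(2)] orth_scale_right[OF assms(3)]] .
  have "B (x + c *s u) w = B x w + c * B u w" by (simp only: add_left scale_left)
  also have "\<dots> = 0" using assms(4) by (simp add: c_def)
  finally show "B (x + c *s u) w = 0" .
  show "B (x + c *s u) p = B x p" if "B u p = 0" for p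
    using that by (simp only: add_left scale_left mult_zero_right add_0_right)
qed

lemma span_vertex:
  assumes "vec.independent X" "card X = k" "singular_set X"
  shows "vec.span X \<in> polar_grassmann_vertices sing k"
proof -
  have "vec.dim (vec.span X) = k"
    using vec.dim_span_eq_card_independent[OF assms(1)] assms(2) by simp
  then show ?thesis using sing_span[OF assms(3)]
    by (simp add: polar_grassmann_vertices_iff vec.subspace_span)
qed

lemma span_adj:
  assumes "vec.independent (X \<union> Y)" "card X = k" "card (X \<union> Y) = k + 1" "singular_set (X \<union> Y)"
  shows "polar_grassmann_adj sing k (vec.span X) (vec.span Y)"
proof -
  have "vec.span X \<noteq> vec.span Y"
  proof
    assume "vec.span X = vec.span Y"
    then have "X \<union> Y \<subseteq> vec.span X"
      using vec.span_superset[of X] vec.span_superset[of Y] by blast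
    then have "X = X \<union> Y"
      using vec.spanning_subset_independent[OF _ assms(1)] by blast
    with assms(2,3) show False by simp
  qed
  moreover have "vec.dim (vec.span (X \<union> Y)) = k + 1"
    using vec.dim_span_eq_card_independent[OF assms(1)] assms(3) by simp
  ultimately show ?thesis
    using sing_span[OF assms(4)]
    by (simp add: polar_grassmann_adj_def singular_subspace_def subspace_sum_span vec.subspace_span)
qed

lemma not_adj_if_not_orth:
  assumes "vec.subspace U" "vec.subspace W" "a \<in> U" "b \<in> W" "B a b \<noteq> 0"
  shows "\<not> polar_grassmann_adj sing k U W"
proof
  assume "polar_grassmann_adj sing k U W"
  then have "vec.subspace (subspace_sum U W)" "sing (subspace_sum U W)"
    unfolding polar_grassmann_adj_def singular_subspace_def by auto
  then have "singular_set (subspace_sum U W)" using sing_iff_singular_set by blast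
  moreover have "a \<in> subspace_sum U W" "b \<in> subspace_sum U W"
    using subspace_sum_upper[OF assms(1,2)] assms(3,4) by blast+
  ultimately show False using assms(5) unfolding singular_set_def by blast
qed

text \<open>If \<open>U\<close> and \<open>W\<close> meet in codimension 2, a common neighbour \<open>Z\<close> is spanned by its
  hyperplanes \<open>Z \<inter> U\<close> and \<open>Z \<inter> W\<close>; the first is orthogonal to \<open>W\<close>, the second to \<open>U\<close>.\<close>

lemma common_neighbour_subset:
  assumes U: "U \<in> polar_grassmann_vertices sing k" and W: "W \<in> polar_grassmann_vertices sing k"
    and Z: "Z \<in> polar_grassmann_vertices sing k"
    and UZ: "polar_grassmann_adj sing k U Z" and ZW: "polar_grassmann_adj sing k Z W"
    and UW: "vec.dim (subspace_sum U W) = k + 2"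
  shows "Z \<subseteq> subspace_sum {x \<in> U. \<forall>w\<in>W. B x w = 0} {x \<in> W. \<forall>u\<in>U. B x u = 0}"
proof -
  have sub: "vec.subspace U" "vec.subspace W" "vec.subspace Z"
    and dim: "vec.dim U = k" "vec.dim W = k" "vec.dim Z = k"
    using U W Z by (simp_all add: polar_grassmann_vertices_iff)
  have sumUZ: "vec.subspace (subspace_sum U Z)" "sing (subspace_sum U Z)"
      "vec.dim (subspace_sum U Z) = k + 1"
    using UZ unfolding polar_grassmann_adj_def singular_subspace_def by auto
  have sumZW: "vec.subspace (subspace_sum Z W)" "sing (subspace_sum Z W)"
      "vec.dim (subspace_sum Z W) = k + 1"
    using ZW unfolding polar_grassmann_adj_def singular_subspace_def by auto
  define I1 where "I1 = U \<inter> Z"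
  define I2 where "I2 = Z \<inter> W"
  have subI: "vec.subspace I1" "vec.subspace I2"
    unfolding I1_def I2_def using sub vec.subspace_inter by blast+
  have "vec.dim I1 + 1 = k" "vec.dim I2 + 1 = k" "vec.dim (U \<inter> W) + 2 = k"
    using dim_subspace_sum_Int[of U Z] dim_subspace_sum_Int[of Z W] dim_subspace_sum_Int[of U W]
      sub dim sumUZ(3) sumZW(3) UW unfolding I1_def I2_def by simp_all
  moreover have "vec.dim (I1 \<inter> I2) \<le> vec.dim (U \<inter> W)"
    by (rule vec.dim_subset) (auto simp: I1_def I2_def)
  ultimately have "k \<le> vec.dim (subspace_sum I1 I2)"
    using dim_subspace_sum_Int[OF subI] by linarith
  moreover have "subspace_sum I1 I2 \<subseteq> Z"
    using subspace_sum_subset[OF sub(3)] unfolding I1_def I2_def by blast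
  ultimately have "Z = subspace_sum I1 I2"
    using vec.subspace_dim_equal[OF subspace_subspace_sum[OF subI] sub(3)] dim(3) by simp
  moreover have "I1 \<subseteq> {x \<in> U. \<forall>w\<in>W. B x w = 0}"
    using subspace_sum_upper[OF sub(3,2)] sumZW(1,2) sing_iff unfolding I1_def by blast
  moreover have "I2 \<subseteq> {x \<in> W. \<forall>u\<in>U. B x u = 0}"
    using subspace_sum_upper[OF sub(1,3)] sumUZ(1,2) sing_iff unfolding I2_def by blast
  ultimately show ?thesis using subspace_sum_mono by blast
qed

lemma unique_common_neighbour:
  assumes U: "U \<in> polar_grassmann_vertices sing k" "U = vec.span (insert u S)"
    and W: "W \<in> polar_grassmann_vertices sing k" "W = vec.span (insert w T)"
    and UW: "vec.dim (subspace_sum U W) = k + 2"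
    and orth: "\<forall>s\<in>S. B s w = 0" "\<forall>t\<in>T. B t u = 0" "B u w \<noteq> 0"
    and ST: "vec.dim (vec.span (S \<union> T)) = k"
    and Z: "Z \<in> polar_grassmann_vertices sing k"
      "polar_grassmann_adj sing k U Z" "polar_grassmann_adj sing k Z W"
  shows "Z = vec.span (S \<union> T)"
proof -
  have "{x \<in> U. \<forall>w'\<in>W. B x w' = 0} \<subseteq> vec.span S"
  proof
    fix x assume "x \<in> {x \<in> U. \<forall>w'\<in>W. B x w' = 0}"
    moreover have "w \<in> W" using W(2) vec.span_base by blast
    ultimately show "x \<in> vec.span S" using span_insert_orth[of x u S w] U(2) orth(1,3) by blast
  qed
  moreover have "{x \<in> W. \<forall>u'\<in>U. B x u' = 0} \<subseteq> vec.span T"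
  proof
    fix x assume "x \<in> {x \<in> W. \<forall>u'\<in>U. B x u' = 0}"
    moreover have "u \<in> U" using U(2) vec.span_base by blast
    moreover have "B w u \<noteq> 0" using orth(3) orth_commute by blast
    ultimately show "x \<in> vec.span T" using span_insert_orth[of x w T u] W(2) orth(2) by blast
  qed
  ultimately have "Z \<subseteq> vec.span (S \<union> T)"
    using common_neighbour_subset[OF U(1) W(1) Z UW]
      subspace_sum_mono[of _ "vec.span S" _ "vec.span T"]
    unfolding subspace_sum_span by blast
  then show ?thesis
    using vec.subspace_dim_equal[of Z "vec.span (S \<union> T)"] Z(1) ST
    by (simp add: polar_grassmann_vertices_iff vec.subspace_span)
qed

lemma singular_set_insert:
  assumes "singular_set X" "singular w" "\<forall>x\<in>X. B w x = 0"
  shows "singular_set (insert w X)"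
proof -
  have "B x w = 0" if "x \<in> X" for x using assms(3) that orth_commute by blast
  then show ?thesis using assms singular_isotropic unfolding singular_set_def by auto
qed

lemma independent_insert_if_not_orth:
  assumes "vec.independent S" "\<forall>s\<in>S. B s a = 0" "B x a \<noteq> 0"
  shows "vec.independent (insert x S)" "x \<notin> S"
proof -
  have "x \<notin> vec.span S" using orth_span[OF assms(2)] assms(3) by blast
  then show "vec.independent (insert x S)" "x \<notin> S"
    using vec.independent_insertI[OF _ assms(1)] vec.span_base by blast+
qed

lemma singular_independent_subset:
  assumes "vec.subspace M" "sing M" "n \<le> vec.dim M"
  obtains C where "vec.independent C" "card C = n" "singular_set C"
proof -
  obtain Bs where Bs: "Bs \<subseteq> M" "vec.independent Bs" "card Bs = vec.dim M"
    using vec.basis_subspace_exists[OF assms(1)] by blast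
  obtain C where C: "C \<subseteq> Bs" "card C = n"
    using obtain_subset_with_card_n[of n Bs] assms(3) Bs(3) by auto
  have "singular_set M" using assms(1,2) sing_iff_singular_set by blast
  then have "singular_set C" using C(1) Bs(1) singular_set_subset by blast
  moreover have "vec.independent C" using vec.independent_mono[OF Bs(2) C(1)] .
  ultimately show thesis using that C(2) by blast
qed

lemma singular_partners:
  assumes "vec.independent (insert u1 (insert u2 (insert w1 E)))"
    "singular_set (insert u1 (insert u2 (insert w1 E)))"
    "u1 \<notin> insert u2 (insert w1 E)" "u2 \<notin> insert w1 E" "w1 \<notin> E"
  obtains w2 y where "singular w2" "\<forall>p\<in>insert u1 (insert w1 E). B w2 p = 0" "B u2 w2 \<noteq> 0"
    "singular y" "\<forall>p\<in>insert w2 (insert u1 (insert u2 E)). B y p = 0" "B y w1 \<noteq> 0"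
proof -
  let ?C = "insert u1 (insert u2 (insert w1 E))"
  have orth_C: "\<And>x z. x \<in> ?C \<Longrightarrow> z \<in> ?C \<Longrightarrow> B x z = 0" and "singular u2"
    using assms(2) unfolding singular_set_def by blast+
  have "finite E" using vec.finiteI_independent[OF assms(1)] by simp
  have C_eq: "?C = insert u2 (insert u1 (insert w1 E))" "?C = insert w1 (insert u1 (insert u2 E))"
    by blast+
  have sing: "singular_set (insert u2 (insert u1 (insert w1 E)))"
      "singular_set (insert w1 (insert u1 (insert u2 E)))"
    by (subst C_eq[symmetric], rule assms(2))+
  have notin_span: "u2 \<notin> vec.span (insert u1 (insert w1 E))"
      "w1 \<notin> vec.span (insert u1 (insert u2 E))"
    using assms(3-5) by (intro independent_insert_notin_span assms(1)[unfolded C_eq(1)]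
        assms(1)[unfolded C_eq(2)]; auto)+
  obtain w2 where w2: "singular w2" "\<forall>p\<in>insert u1 (insert w1 E). B w2 p = 0" "B w2 u2 \<noteq> 0"
    using singular_partner[OF _ sing(1) notin_span(1)] \<open>finite E\<close> by blast
  obtain y0 where y0: "singular y0" "\<forall>p\<in>insert u1 (insert u2 E). B y0 p = 0" "B y0 w1 \<noteq> 0"
    using singular_partner[OF _ sing(2) notin_span(2)] \<open>finite E\<close> by blast
  have "B u2 w2 \<noteq> 0" using w2(3) orth_commute by blast
  then obtain y where "singular y" "B y w2 = 0" "\<And>p. B u2 p = 0 \<Longrightarrow> B y p = B y0 p"
    using singular_orth_adjust[OF y0(1) \<open>singular u2\<close>] y0(2) by blast
  moreover have "\<And>p. p \<in> ?C \<Longrightarrow> B u2 p = 0" using orth_C by blast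
  ultimately show thesis
    using that[OF w2(1,2) \<open>B u2 w2 \<noteq> 0\<close>] y0(2,3) by auto
qed

end

section \<open>The counterexample\<close>

locale polar_frame = formed_space B singular sing
  for B :: "'a::field^'n \<Rightarrow> 'a^'n \<Rightarrow> 'a" and singular sing +
  fixes k :: nat and E :: "('a^'n) set" and u1 u2 w1 w2 y :: "'a^'n"
  assumes independent_base: "vec.independent (insert u1 (insert u2 (insert w1 E)))"
    and singular_base: "singular_set (insert u1 (insert u2 (insert w1 E)))"
    and distinct: "u1 \<notin> insert u2 (insert w1 E)" "u2 \<notin> insert w1 E" "w1 \<notin> E"
    and card_E: "card E + 2 = k"
    and w2: "singular w2" "\<forall>p\<in>insert u1 (insert w1 E). B w2 p = 0" "B u2 w2 \<noteq> 0"
    and y: "singular y" "\<forall>p\<in>insert w2 (insert u1 (insert u2 E)). B y p = 0" "B y w1 \<noteq> 0"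
begin

abbreviation V where "V \<equiv> polar_grassmann_vertices sing k"
abbreviation adj where "adj \<equiv> polar_grassmann_adj sing k"

definition "U = vec.span (insert u1 (insert u2 E))"
definition "W = vec.span (insert w1 (insert w2 E))"
definition "W' = vec.span (insert u1 (insert w2 E))"
definition "Z = vec.span (insert u1 (insert w1 E))"
definition "Z' = vec.span (insert u1 (insert y E))"

lemma finite_E: "finite E"
  using vec.finiteI_independent[OF independent_base] by simp

lemma orth_base:
  "x \<in> insert u1 (insert u2 (insert w1 E)) \<Longrightarrow> z \<in> insert u1 (insert u2 (insert w1 E)) \<Longrightarrow> B x z = 0"
  using singular_base unfolding singular_set_def by blast

text \<open>\<open>B _ u\<^sub>2\<close> vanishes on \<open>\<langle>u\<^sub>1, u\<^sub>2, w\<^sub>1, E\<rangle>\<close> but not at \<open>w\<^sub>2\<close>, and \<open>B _ w\<^sub>1\<close> vanishes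
  on \<open>\<langle>u\<^sub>1, u\<^sub>2, w\<^sub>1, w\<^sub>2, E\<rangle>\<close> but not at \<open>y\<close>.\<close>

lemma independent_frame:
  "vec.independent (insert y (insert w2 (insert u1 (insert u2 (insert w1 E)))))"
  "y \<notin> insert w2 (insert u1 (insert u2 (insert w1 E)))" "w2 \<notin> insert u1 (insert u2 (insert w1 E))"
proof -
  have "B w2 u2 \<noteq> 0" using w2(3) orth_commute by blast
  then have indep_w2: "vec.independent (insert w2 (insert u1 (insert u2 (insert w1 E))))"
    and "w2 \<notin> insert u1 (insert u2 (insert w1 E))"
    using independent_insert_if_not_orth[OF independent_base, of u2 w2] orth_base by blast+
  then show "w2 \<notin> insert u1 (insert u2 (insert w1 E))" by blast
  have "\<forall>s\<in>insert w2 (insert u1 (insert u2 (insert w1 E))). B s w1 = 0"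
    using orth_base w2(2) by auto
  then show "vec.independent (insert y (insert w2 (insert u1 (insert u2 (insert w1 E)))))"
    "y \<notin> insert w2 (insert u1 (insert u2 (insert w1 E)))"
    using independent_insert_if_not_orth[OF indep_w2 _ y(3)] by blast+
qed

lemma singular_sets:
  "singular_set (insert w2 (insert u1 (insert w1 E)))"
  "singular_set (insert y (insert u1 (insert u2 E)))"
  "singular_set (insert y (insert w2 (insert u1 E)))"
proof -
  have "singular_set (insert u1 (insert w1 E))" "singular_set (insert u1 (insert u2 E))"
    by (rule singular_set_subset[OF singular_base], blast)+
  then show sing_w2: "singular_set (insert w2 (insert u1 (insert w1 E)))"
    and "singular_set (insert y (insert u1 (insert u2 E)))"
    using singular_set_insert[OF _ w2(1,2)] singular_set_insert[OF _ y(1)] y(2) by auto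
  have "singular_set (insert w2 (insert u1 E))"
    by (rule singular_set_subset[OF sing_w2]) blast
  then show "singular_set (insert y (insert w2 (insert u1 E)))"
    using singular_set_insert[OF _ y(1)] y(2) by auto
qed

lemma card_spans:
  "card (insert u1 (insert u2 E)) = k" "card (insert w1 (insert w2 E)) = k"
  "card (insert u1 (insert w2 E)) = k" "card (insert u1 (insert w1 E)) = k"
  "card (insert u1 (insert y E)) = k"
  "card (insert u1 (insert u2 (insert w1 E))) = k + 1"
  "card (insert w2 (insert u1 (insert w1 E))) = k + 1"
  "card (insert y (insert u1 (insert u2 E))) = k + 1"
  "card (insert y (insert w2 (insert u1 E))) = k + 1"
  using finite_E card_E distinct independent_frame(2,3) by auto

lemma span_vertex_frame:
  assumes "X \<subseteq> insert y (insert w2 (insert u1 (insert u2 (insert w1 E))))" "card X = k"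
    "X \<subseteq> S" "singular_set S"
  shows "vec.span X \<in> V"
  using span_vertex[OF vec.independent_mono[OF independent_frame(1) assms(1)] assms(2)]
    singular_set_subset[OF assms(4,3)] .

lemma span_adj_frame:
  assumes "X \<union> Y = S" "S \<subseteq> insert y (insert w2 (insert u1 (insert u2 (insert w1 E))))"
    "card X = k" "card S = k + 1" "singular_set S"
  shows "adj (vec.span X) (vec.span Y)"
  using span_adj[of X Y] vec.independent_mono[OF independent_frame(1) assms(2)] assms by simp

lemma vertices: "U \<in> V" "W \<in> V" "W' \<in> V" "Z \<in> V" "Z' \<in> V"
proof -
  show "U \<in> V" "Z \<in> V" unfolding U_def Z_def
    by (rule span_vertex_frame[OF _ card_spans(1) _ singular_base]
        span_vertex_frame[OF _ card_spans(4) _ singular_base]; blast)+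
  show "W \<in> V" "W' \<in> V" unfolding W_def W'_def
    by (rule span_vertex_frame[OF _ card_spans(2) _ singular_sets(1)]
        span_vertex_frame[OF _ card_spans(3) _ singular_sets(1)]; blast)+
  show "Z' \<in> V" unfolding Z'_def
    by (rule span_vertex_frame[OF _ card_spans(5) _ singular_sets(2)]; blast)
qed

lemma adjacent: "adj U Z" "adj Z W" "adj Z W'" "adj U Z'" "adj Z' W'"
  unfolding U_def W_def W'_def Z_def Z'_def
  by (rule span_adj_frame[OF _ _ card_spans(1) card_spans(6) singular_base]
      span_adj_frame[OF _ _ card_spans(4) card_spans(7) singular_sets(1)]
      span_adj_frame[OF _ _ card_spans(4) card_spans(7) singular_sets(1)]
      span_adj_frame[OF _ _ card_spans(1) card_spans(8) singular_sets(2)]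
      span_adj_frame[OF _ _ card_spans(5) card_spans(9) singular_sets(3)]; blast)+

lemma not_adjacent: "U \<noteq> W" "\<not> adj U W" "U \<noteq> W'" "\<not> adj U W'"
proof -
  have in_span: "u2 \<in> U" "w2 \<in> W" "w2 \<in> W'"
    unfolding U_def W_def W'_def by (simp_all add: vec.span_base)
  show "\<not> adj U W" "\<not> adj U W'"
    using not_adj_if_not_orth[OF _ _ in_span(1) _ w2(3)] in_span(2,3)
    unfolding U_def W_def W'_def by (simp_all add: vec.subspace_span)
  have "singular_set (insert u1 (insert u2 E))"
    by (rule singular_set_subset[OF singular_base]) blast
  then have "singular_set U" unfolding U_def by (rule singular_set_span)
  then show "U \<noteq> W" "U \<noteq> W'" using in_span w2(3) unfolding singular_set_def by blast+
qed

lemma common_neighbours_U_W: "{X \<in> V. adj U X \<and> adj X W} = {Z}"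
proof -
  have "vec.independent (insert u1 (insert u2 E) \<union> insert w1 (insert w2 E))"
    by (rule vec.independent_mono[OF independent_frame(1)]) blast
  then have "vec.dim (subspace_sum U W) = card (insert u1 (insert u2 E) \<union> insert w1 (insert w2 E))"
    unfolding U_def W_def subspace_sum_span by (rule vec.dim_span_eq_card_independent)
  also have "\<dots> = k + 2" using finite_E card_E distinct independent_frame(3) by auto
  finally have dim_UW: "vec.dim (subspace_sum U W) = k + 2" .
  have Z_eq: "Z = vec.span (insert u1 E \<union> insert w1 E)"
    unfolding Z_def by (simp add: insert_commute)
  have "X = Z" if "X \<in> V" "adj U X" "adj X W" for X
    unfolding Z_eq
  proof (rule unique_common_neighbour[OF vertices(1) _ vertices(2) _ dim_UW _ _ w2(3) _ that])
    show "U = vec.span (insert u2 (insert u1 E))" "W = vec.span (insert w2 (insert w1 E))"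
      unfolding U_def W_def by (simp_all add: insert_commute)
    show "\<forall>s\<in>insert u1 E. B s w2 = 0" using singular_sets(1) unfolding singular_set_def by blast
    show "\<forall>t\<in>insert w1 E. B t u2 = 0" using orth_base by blast
    show "vec.dim (vec.span (insert u1 E \<union> insert w1 E)) = k"
      using vertices(4) Z_eq by (simp add: polar_grassmann_vertices_iff)
  qed
  then show ?thesis using vertices(4) adjacent(1,2) by blast
qed

lemma common_neighbours_U_W': "{Z, Z'} \<subseteq> {X \<in> V. adj U X \<and> adj X W'}" "Z \<noteq> Z'"
proof -
  show "{Z, Z'} \<subseteq> {X \<in> V. adj U X \<and> adj X W'}" using vertices adjacent by blast
  have "Z \<subseteq> vec.span (insert w2 (insert u1 (insert u2 (insert w1 E))))"
    unfolding Z_def by (rule vec.span_mono) blast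
  moreover have "y \<in> Z'" unfolding Z'_def by (simp add: vec.span_base)
  ultimately show "Z \<noteq> Z'"
    using independent_insert_notin_span[OF independent_frame(1,2)] by blast
qed

end

lemma obtain_three_elements:
  assumes "card C = n + 3"
  obtains a b c E where "C = insert a (insert b (insert c E))"
    "a \<notin> insert b (insert c E)" "b \<notin> insert c E" "c \<notin> E" "card E = n"
proof -
  obtain a C1 where C1: "C = insert a C1" "a \<notin> C1" "card C1 = Suc (Suc n)"
    using card_eq_SucD[of C "Suc (Suc n)"] assms by auto
  then obtain b C2 where C2: "C1 = insert b C2" "b \<notin> C2" "card C2 = Suc n"
    using card_eq_SucD by blast
  then obtain c E where "C2 = insert c E" "c \<notin> E" "card E = n"
    using card_eq_SucD by blast
  with C1 C2 show thesis using that by simp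
qed

context formed_space
begin

lemma polar_frame_exists:
  assumes "vec.subspace M" "sing M" "k + 1 \<le> vec.dim M" "2 \<le> k"
  obtains E u1 u2 w1 w2 y where "polar_frame B singular sing k E u1 u2 w1 w2 y"
proof -
  have "(k - 2) + 3 \<le> vec.dim M" using assms(3,4) by simp
  then obtain C where C: "vec.independent C" "card C = (k - 2) + 3" "singular_set C"
    using singular_independent_subset[OF assms(1,2)] by blast
  obtain u1 u2 w1 E where C_eq: "C = insert u1 (insert u2 (insert w1 E))"
    and distinct: "u1 \<notin> insert u2 (insert w1 E)" "u2 \<notin> insert w1 E" "w1 \<notin> E"
    and "card E = k - 2"
    using C(2) by (rule obtain_three_elements)
  then have card_E: "card E + 2 = k" using assms(4) by simp
  obtain w2 y where w2: "singular w2" "\<forall>p\<in>insert u1 (insert w1 E). B w2 p = 0" "B u2 w2 \<noteq> 0"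
    and y: "singular y" "\<forall>p\<in>insert w2 (insert u1 (insert u2 E)). B y p = 0" "B y w1 \<noteq> 0"
    using singular_partners[OF C(1,3)[unfolded C_eq] distinct] by blast
  have "polar_frame_axioms B singular k E u1 u2 w1 w2 y"
    using C(1,3)[unfolded C_eq] distinct card_E w2 y by (rule polar_frame_axioms.intro)
  then show thesis using that polar_frame.intro[OF formed_space_axioms] by blast
qed

theorem polar_grassmann_not_distance_regular:
  assumes "vec.subspace M" "sing M" "k + 1 \<le> vec.dim M" "2 \<le> k"
  shows "\<not> distance_regular (polar_grassmann_vertices sing k) (polar_grassmann_adj sing k)"
proof
  assume regular: "distance_regular (polar_grassmann_vertices sing k) (polar_grassmann_adj sing k)"
  obtain E u1 u2 w1 w2 y where "polar_frame B singular sing k E u1 u2 w1 w2 y"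
    using polar_frame_exists[OF assms] .
  then interpret polar_frame B singular sing k E u1 u2 w1 w2 y .
  have "gdist V adj U W = 2" "gdist V adj U W' = 2"
    using gdist_eq_2[OF vertices(1,2,4) not_adjacent(1,2) adjacent(1,2)]
      gdist_eq_2[OF vertices(1,3,4) not_adjacent(3,4) adjacent(1,3)] .
  then have "card {X \<in> V. adj U X \<and> adj X W'} = card {X \<in> V. adj U X \<and> adj X W}"
    by (intro distance_regular_card_common_neighbours_eq[OF regular vertices(1,3) _ vertices(1,2)])
  also have "\<dots> = 1" using common_neighbours_U_W by simp
  finally obtain X where "{X' \<in> V. adj U X' \<and> adj X' W'} = {X}" by (rule card_1_singletonE)
  then show False using common_neighbours_U_W' by blast
qed

end

section \<open>The classical formed spaces\<close>

lemma formed_space_symplectic: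
  assumes "symplectic_form B"
  shows "formed_space B (\<lambda>_. True) (totally_isotropic B)"
proof -
  have add_left: "\<And>x y z. B (x + y) z = B x z + B y z"
    and scale_left: "\<And>c x z. B (c *s x) z = c * B x z"
    and add_right: "\<And>x y z. B z (x + y) = B z x + B z y"
    and scale_right: "\<And>c x z. B z (c *s x) = c * B z x"
    and alt: "\<And>v. B v v = 0" and nondeg: "nondegenerate_form B"
    using assms unfolding symplectic_form_def bilinear_form_def by auto
  have antisym: "B y x = - B x y" for x y
  proof -
    have "0 = B (x + y) (x + y)" by (rule alt[symmetric])
    also have "\<dots> = B x x + B y x + (B x y + B y y)" by (simp only: add_left add_right)
    also have "\<dots> = B y x + B x y" by (simp only: alt add_0 add_0_right)
    finally show ?thesis by (simp add: eq_neg_iff_add_eq_0)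
  qed
  show ?thesis
  proof
    show "\<exists>d. \<forall>v. B v (d *s p) = c * B v p" for c p by (auto simp: scale_right)
    show "B x y = 0 \<longleftrightarrow> B y x = 0" for x y using antisym[of x y] by simp
    show "v = 0" if "\<forall>x. B x v = 0" for v
      using nondeg that antisym unfolding nondegenerate_form_def by (metis neg_equal_0_iff_equal)
  qed (auto simp: add_left scale_left add_right alt totally_isotropic_def)
qed

lemma polar_form_commute: "polar_form Q x y = polar_form Q y x"
  unfolding polar_form_def by (metis add.commute diff_right_commute)

lemma quadratic_form_add: "Q (x + y) = polar_form Q x y + Q x + Q y"
  unfolding polar_form_def by simp

lemma polar_form_diag:
  assumes "quadratic_form Q"
  shows "polar_form Q x x = 2 * Q x"
proof -
  have "x + x = (2::'a) *s x"
    by (simp only: one_add_one[symmetric] vector_sadd_rdistrib vector_smult_lid)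
  then show ?thesis
    using assms unfolding quadratic_form_def polar_form_def by (simp add: power2_eq_square)
qed

lemma quadratic_form_singular_shift:
  assumes "quadratic_form Q" "Q a = 0" "polar_form Q v a \<noteq> 0"
  shows "Q (v + (- Q v / polar_form Q v a) *s a) = 0"
proof -
  let ?c = "- Q v / polar_form Q v a"
  have scale: "polar_form Q v (?c *s a) = ?c * polar_form Q v a" "Q (?c *s a) = ?c ^ 2 * Q a"
    using assms(1) unfolding quadratic_form_def bilinear_form_def by blast+
  have "Q (v + ?c *s a) = polar_form Q v (?c *s a) + Q v + Q (?c *s a)"
    by (rule quadratic_form_add)
  also have "\<dots> = 0" unfolding scale using assms(2,3) by simp
  finally show ?thesis .
qed

lemma formed_space_orthogonal:
  assumes "nondegenerate_quadratic_form Q"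
  shows "formed_space (polar_form Q) (\<lambda>v. Q v = 0) (totally_singular Q)"
proof -
  have Q: "quadratic_form Q" and Q_scale: "\<And>c v. Q (c *s v) = c ^ 2 * Q v"
    and nondeg: "\<And>v. v \<noteq> 0 \<Longrightarrow> \<forall>w. polar_form Q v w = 0 \<Longrightarrow> Q v \<noteq> 0"
    and bilinear: "bilinear_form (polar_form Q)"
    using assms unfolding nondegenerate_quadratic_form_def quadratic_form_def by auto
  show ?thesis
  proof
    show "\<exists>d. \<forall>v. polar_form Q v (d *s p) = c * polar_form Q v p" for c p
      using bilinear unfolding bilinear_form_def by blast
    show "polar_form Q x y = 0 \<longleftrightarrow> polar_form Q y x = 0" for x y
      by (simp add: polar_form_commute)
    show "Q 0 = 0" using Q_scale[of 0 0] by simp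
    show "Q (x + y) = 0" if "Q x = 0" "Q y = 0" "polar_form Q x y = 0" for x y
      using that by (simp add: quadratic_form_add)
    show "Q (c *s x) = 0" if "Q x = 0" for c x
      using that Q_scale[of c x] by simp
    show "polar_form Q x x = 0" if "Q x = 0" for x
      using that polar_form_diag[OF Q] by simp
    show "\<exists>c. Q (v + c *s a) = 0" if "Q a = 0" "polar_form Q v a \<noteq> 0" for v a
      using quadratic_form_singular_shift[OF Q that] by blast
    show "v = 0" if "Q v = 0" "\<forall>x. polar_form Q x v = 0" for v
      using nondeg[of v] that polar_form_commute by metis
    show "totally_singular Q S \<longleftrightarrow>
        (\<forall>u\<in>S. Q u = 0) \<and> (\<forall>u\<in>S. \<forall>v\<in>S. polar_form Q u v = 0)" if "vec.subspace S" for S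
    proof -
      have "polar_form Q u v = 0" if "\<forall>u\<in>S. Q u = 0" "u \<in> S" "v \<in> S" for u v
        using that vec.subspace_add[OF \<open>vec.subspace S\<close>] unfolding polar_form_def by simp
      then show ?thesis unfolding totally_singular_def by blast
    qed
  qed (use bilinear in \<open>simp_all add: bilinear_form_def\<close>)
qed

lemma field_involution_hom:
  assumes "field_involution \<sigma>"
  shows "\<sigma> 0 = 0" "\<sigma> (- x) = - \<sigma> x" "\<sigma> (x * y) = \<sigma> x * \<sigma> y" "\<sigma> (x / y) = \<sigma> x / \<sigma> y"
    "\<sigma> (\<sigma> x) = x"
proof -
  have add: "\<And>x y. \<sigma> (x + y) = \<sigma> x + \<sigma> y" and mult: "\<And>x y. \<sigma> (x * y) = \<sigma> x * \<sigma> y"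
    and invol: "\<And>x. \<sigma> (\<sigma> x) = x"
    using assms unfolding field_involution_def by blast+
  show zero: "\<sigma> 0 = 0" using add[of 0 0] by (metis add.right_neutral add_cancel_right_right)
  have "\<sigma> x + \<sigma> (- x) = 0" using add[of x "- x"] zero by simp
  then show "\<sigma> (- x) = - \<sigma> x" by (simp only: add_eq_0_iff)
  show "\<sigma> (x * y) = \<sigma> x * \<sigma> y" "\<sigma> (\<sigma> x) = x" by (fact mult invol)+
  have "\<sigma> (inverse y) = inverse (\<sigma> y)"
  proof (cases "y = 0")
    case True
    then show ?thesis using zero by simp
  next
    case False
    have "\<sigma> 1 = 1" using mult[of 1 "\<sigma> 1"] invol[of 1] by (metis mult_cancel_left1 mult.commute zero)
    then have "\<sigma> y * \<sigma> (inverse y) = 1" using mult[of y "inverse y"] False by simp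
    then show ?thesis by (metis inverse_unique)
  qed
  then show "\<sigma> (x / y) = \<sigma> x / \<sigma> y" by (simp add: divide_inverse mult)
qed

text \<open>In characteristic 2 the trace \<open>g + \<sigma> g\<close> is \<open>g - \<sigma> g\<close>, which is nonzero for any \<open>g\<close>
  not fixed by \<open>\<sigma>\<close>.\<close>

lemma field_involution_trace_nonzero:
  assumes "field_involution \<sigma>"
  obtains g where "g + \<sigma> g \<noteq> 0"
proof (cases "(1::'a) + 1 = 0")
  case True
  obtain g where g: "\<sigma> g \<noteq> g" using assms unfolding field_involution_def by blast
  have "g + g = 0" using True by (metis distrib_left mult.right_neutral mult_zero_right)
  then have "g + \<sigma> g \<noteq> 0" using g by (metis add_left_imp_eq)
  then show thesis by (rule that)
next
  case False
  have "\<sigma> 1 = 1"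
    using assms unfolding field_involution_def by (metis mult_cancel_left1 mult.commute)
  then show thesis using False that by metis
qed

lemma hermitian_form_right:
  assumes "hermitian_form \<sigma> B"
  shows "B z (x + y) = B z x + B z y" "B z (c *s x) = \<sigma> c * B z x"
proof -
  have add_left: "\<And>u v w. B (u + v) w = B u w + B v w"
    and scale_left: "\<And>c u w. B (c *s u) w = c * B u w" and herm: "\<And>u w. B w u = \<sigma> (B u w)"
    and \<sigma>_add: "\<And>x y. \<sigma> (x + y) = \<sigma> x + \<sigma> y" and \<sigma>_mult: "\<And>x y. \<sigma> (x * y) = \<sigma> x * \<sigma> y"
    using assms unfolding hermitian_form_def field_involution_def by blast+
  have "B z (x + y) = \<sigma> (B (x + y) z)" by (rule herm)
  also have "\<dots> = \<sigma> (B x z) + \<sigma> (B y z)" by (simp only: add_left \<sigma>_add)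
  finally show "B z (x + y) = B z x + B z y" by (simp only: herm[of z x] herm[of z y])
  have "B z (c *s x) = \<sigma> (B (c *s x) z)" by (rule herm)
  also have "\<dots> = \<sigma> c * \<sigma> (B x z)" by (simp only: scale_left \<sigma>_mult)
  finally show "B z (c *s x) = \<sigma> c * B z x" by (simp only: herm[of z x])
qed

lemma hermitian_singular_shift:
  assumes "hermitian_form \<sigma> B" "B a a = 0" "B v a \<noteq> 0"
  shows "\<exists>c. B (v + c *s a) (v + c *s a) = 0"
proof -
  have \<sigma>: "field_involution \<sigma>" and herm: "\<And>u w. B w u = \<sigma> (B u w)"
    and add_left: "\<And>u v w. B (u + v) w = B u w + B v w"
    and scale_left: "\<And>c u w. B (c *s u) w = c * B u w"
    using assms(1) unfolding hermitian_form_def by blast+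
  note \<sigma>_hom = field_involution_hom[OF \<sigma>]
  obtain g where g: "g + \<sigma> g \<noteq> 0" using field_involution_trace_nonzero[OF \<sigma>] by blast
  define e where "e = g + \<sigma> g"
  define t where "t = B v a"
  \<comment> \<open>\<open>d = c \<sigma>(t)\<close> is chosen with \<open>d + \<sigma>(d) = - B v v\<close>, using an element of nonzero trace\<close>
  define c where "c = - (B v v * g) / (e * \<sigma> t)"
  have "\<sigma> e = e" unfolding e_def using \<sigma> \<sigma>_hom(5) unfolding field_involution_def
    by (simp add: add.commute)
  moreover have "\<sigma> (B v v) = B v v" using herm[of v v] by simp
  ultimately have \<sigma>c: "\<sigma> c = - (B v v * \<sigma> g) / (e * t)"
    unfolding c_def by (simp add: \<sigma>_hom)
  have "t \<noteq> 0" "\<sigma> t \<noteq> 0" using assms(3) \<sigma>_hom(1,5) unfolding t_def by metis+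
  then have cross: "\<sigma> c * t = - (B v v * \<sigma> g) / e" "c * \<sigma> t = - (B v v * g) / e"
    unfolding \<sigma>c by (simp_all add: c_def)
  have "B (v + c *s a) (v + c *s a) = B v v + \<sigma> c * t + c * \<sigma> t"
    using assms(2) herm[of a v] unfolding t_def
    by (simp add: add_left scale_left hermitian_form_right[OF assms(1)])
  also have "\<dots> = B v v - B v v * (g + \<sigma> g) / e"
    unfolding cross by (simp add: algebra_simps add_divide_distrib)
  also have "\<dots> = 0" using g unfolding e_def by simp
  finally show ?thesis by blast
qed

lemma formed_space_unitary:
  assumes "hermitian_form \<sigma> B" "nondegenerate_form B"
  shows "formed_space B (\<lambda>v. B v v = 0) (totally_isotropic B)"
proof -
  have \<sigma>: "field_involution \<sigma>" and add_left: "\<And>u v w. B (u + v) w = B u w + B v w"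
    and scale_left: "\<And>c u w. B (c *s u) w = c * B u w" and herm: "\<And>u w. B w u = \<sigma> (B u w)"
    using assms(1) unfolding hermitian_form_def by blast+
  note right = hermitian_form_right[OF assms(1)]
  have orth_commute: "B x y = 0 \<longleftrightarrow> B y x = 0" for x y
    using herm[of x y] herm[of y x] field_involution_hom(1)[OF \<sigma>] by metis
  show ?thesis
  proof
    show "\<exists>d. \<forall>v. B v (d *s p) = c * B v p" for c p
      by (rule exI[of _ "\<sigma> c"]) (simp add: right field_involution_hom(5)[OF \<sigma>])
    show "B 0 0 = 0" using scale_left[of 0 0 0] by simp
    show "B (x + y) (x + y) = 0" if "B x x = 0" "B y y = 0" "B x y = 0" for x y
      using that orth_commute[of x y] by (simp add: add_left right)
    show "B (c *s x) (c *s x) = 0" if "B x x = 0" for c x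
      using that by (simp add: scale_left right)
    show "\<exists>c. B (v + c *s a) (v + c *s a) = 0" if "B a a = 0" "B v a \<noteq> 0" for v a
      using hermitian_singular_shift[OF assms(1) that] .
    show "v = 0" if "B v v = 0" "\<forall>x. B x v = 0" for v
      using assms(2) that orth_commute unfolding nondegenerate_form_def by blast
    show "B x y = 0 \<longleftrightarrow> B y x = 0" for x y by (rule orth_commute)
    show "totally_isotropic B S \<longleftrightarrow> (\<forall>u\<in>S. B u u = 0) \<and> (\<forall>u\<in>S. \<forall>v\<in>S. B u v = 0)" for S
      unfolding totally_isotropic_def by blast
  qed (simp_all add: add_left scale_left right)
qed

theorem corollary4p4:
  fixes sing :: "('a::{field,finite}^'n) set \<Rightarrow> bool"
    and \<omega> k :: nat
  assumes "classical_formed_space sing \<omega>"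
    and "\<omega> \<ge> 2"
    and "1 < k" and "k < \<omega>"
  shows "\<not> distance_regular (polar_grassmann_vertices sing k) (polar_grassmann_adj sing k)"
proof -
  obtain M where M: "vec.subspace M" "sing M" "vec.dim M = \<omega>"
    using assms(1) unfolding classical_formed_space_def has_witt_index_def by blast
  have k: "k + 1 \<le> vec.dim M" "2 \<le> k" using assms(3,4) M(3) by auto
  consider (symplectic) B where "symplectic_form B" "sing = totally_isotropic B"
    | (orthogonal) Q where "nondegenerate_quadratic_form Q" "sing = totally_singular Q"
    | (unitary) \<sigma> B where "hermitian_form \<sigma> B" "nondegenerate_form B" "sing = totally_isotropic B"
    using assms(1) unfolding classical_formed_space_def by blast
  then show ?thesis
  proof cases
    case symplectic
    then interpret formed_space B "\<lambda>_. True" sing using formed_space_symplectic by simp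
    show ?thesis by (rule polar_grassmann_not_distance_regular[OF M(1,2) k])
  next
    case orthogonal
    then interpret formed_space "polar_form Q" "\<lambda>v. Q v = 0" sing
      using formed_space_orthogonal by simp
    show ?thesis by (rule polar_grassmann_not_distance_regular[OF M(1,2) k])
  next
    case unitary
    then interpret formed_space B "\<lambda>v. B v v = 0" sing using formed_space_unitary by simp
    show ?thesis by (rule polar_grassmann_not_distance_regular[OF M(1,2) k])
  qed
qed

end
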